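(* Under the utility optimization algorithm described in the context, let $r_a^b(\tau)=\frac1\tau\sum_{t=0}^{\tau-1}R_a^b(t)$. Then $$\liminf_{\tau\to\infty}\sum_{a,b\in\mathcal{N}}U_a^b\big(r_a^b(\tau)\big)\;\ge\;U_{tot}(\vec r^{\,*})-\frac{\tilde B}{V},$$ where $U_{tot}(\vec r^{\,*})=\sum_{a,b}U_a^b(r_a^{b*})$ is the optimal network utility achievable by any control policy satisfying the key and queue dynamics, the key availability constraint and network stability, and $\tilde B=B+N^2\gamma d_{max}\mu_{max}$ with $B=N^2\big(\tfrac32d_{max}^2\mu_{max}^2+R_{max}^2\big)+\tfrac L2(P_{max}+K_{max})^2$.
   Context: Network: a graph $G=(\mathcal{N},\mathcal{L})$ with $N=|\mathcal{N}|$ nodes and $L=|\mathcal{L}|$ directed links $l_{[a,c]}$; $\mathcal{N}_a^{in}$ ($\mathcal{N}_a^{out}$) is the set of nodes with a link into (out of) $a$; $d_{max}=\max_a\max(|\mathcal{N}_a^{in}|,|\mathcal{N}_a^{out}|)$. Time is slotted. Per link: key generated per slot $K_{[a,c]}\le K_{max}$ when $S_{[a,c]}(t)=1$; key consumed $P_{[a,c]}(t)\in[0,P_{max}]$; stored key $E_{[a,c]}(t+1)=E_{[a,c]}(t)-P_{[a,c]}(t)+S_{[a,c]}(t)K_{[a,c]}$, $E(0)=0$, constraint $E_{[a,c]}(t)\ge P_{[a,c]}(t)$; rate $\mu_{[a,c]}(t)=\mu_{[a,c]}(P_{[a,c]}(t))\le\mu_{max}$, $\mu_{[a,c]}(P)\le\delta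 P$ for a constant $\delta>0$, split as $\sum_b\mu^b_{[a,c]}(t)$ over types (type-$b$ = destined to $b$). Queues: $Q_a^b(t+1)=Q_a^b(t)+R_a^b(t)+\sum_{c\in\mathcal{N}_a^{in}}\mu^b_{[c,a]}(t)-\sum_{c\in\mathcal{N}_a^{out}}\mu^b_{[a,c]}(t)$, $Q(0)=0$, admitted data $R_a^b(t)\in[0,R_{max}]$. Stability means $\limsup_{t\to\infty}\frac1t\sum_{\tau<t}\sum_{a,b}Q_a^b(\tau)<\infty$. Utilities $U_a^b$ concave nondecreasing, $\beta=\max_{a,b}(U_a^b)'(0)$. Parameters: $V>0$, $\gamma=R_{max}+d_{max}\mu_{max}$, $\theta_{[a,c]}=\delta\beta V+P_{max}$. Weights $W^b_{[a,c]}(t)=\max(Q_a^b(t)-Q_c^b(t)-\gamma,0)$, $W_{[a,c]}(t)=\max_bW^b_{[a,c]}(t)$. Algorithm, each slot $t$: (1) $S_{[a,c]}(t)=1$ iff $E_{[a,c]}(t)<\theta_{[a,c]}$; (2) $R_a^b(t)\in[0,R_{max}]$ maximizes $VU_a^b(R)-Q_a^b(t)R$; (3) $\vec P(t)$ maximizes $\sum_{l_{[a,c]}}\{\mu_{[a,c]}(P_{[a,c]})W_{[a,c]}(t)+(E_{[a,c]}(t)-\theta_{[a,c]})P_{[a,c]}\}$ subject to $E_{[a,c]}(t)\ge P_{[a,c]}$; (4) for $b^*\in\arg\max_bW^b_{[a,c]}(t)$, if $W^{b^*}_{[a,c]}(t)>0$ set $\mu^{b^*}_{[a,c]}(t)=\mu_{[a,c]}(t)$,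 others zero; (5) update by the dynamics. *)

theory Defs
  imports "HOL-Analysis.Analysis"
begin

text \<open>Nodes are the elements of a finite type 'n; a directed link l_[a,c] is the pair (a,c)
  in the link set Lk.
  Type-b flow allocation on link l at slot t is M b l t.\<close>

definition Nin :: "('n \<times> 'n) set \<Rightarrow> 'n \<Rightarrow> 'n set" where
  "Nin Lk a = {c. (c, a) \<in> Lk}"

definition Nout :: "('n \<times> 'n) set \<Rightarrow> 'n \<Rightarrow> 'n set" where
  "Nout Lk a = {c. (a, c) \<in> Lk}"

definition dmax :: "('n::finite \<times> 'n) set \<Rightarrow> nat" where
  "dmax Lk = Max (range (\<lambda>a. max (card (Nin Lk a)) (card (Nout Lk a))))"

definition gam :: "('n::finite \<times> 'n) set \<Rightarrow> real \<Rightarrow> real \<Rightarrow> real" where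
  "gam Lk Rmax mumax = Rmax + real (dmax Lk) * mumax"

definition theta :: "real \<Rightarrow> real \<Rightarrow> real \<Rightarrow> real \<Rightarrow> real" where
  "theta \<delta> \<beta> V Pmax = \<delta> * \<beta> * V + Pmax"

definition Bconst :: "('n::finite \<times> 'n) set \<Rightarrow> real \<Rightarrow> real \<Rightarrow> real \<Rightarrow> real \<Rightarrow> real" where
  "Bconst Lk Rmax mumax Pmax Kmax =
     real (CARD('n))^2 * (3/2 * real (dmax Lk)^2 * mumax^2 + Rmax^2)
     + real (card Lk) / 2 * (Pmax + Kmax)^2"

definition Btilde :: "('n::finite \<times> 'n) set \<Rightarrow> real \<Rightarrow> real \<Rightarrow> real \<Rightarrow> real \<Rightarrow> real" where
  "Btilde Lk Rmax mumax Pmax Kmax =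
     Bconst Lk Rmax mumax Pmax Kmax
     + real (CARD('n))^2 * gam Lk Rmax mumax * real (dmax Lk) * mumax"

definition key_dyn :: "('n \<times> 'n) set \<Rightarrow> ('n \<times> 'n \<Rightarrow> real) \<Rightarrow> ('n \<times> 'n \<Rightarrow> nat \<Rightarrow> bool)
    \<Rightarrow> ('n \<times> 'n \<Rightarrow> nat \<Rightarrow> real) \<Rightarrow> ('n \<times> 'n \<Rightarrow> nat \<Rightarrow> real) \<Rightarrow> bool" where
  "key_dyn Lk K S E P \<longleftrightarrow>
     (\<forall>l\<in>Lk. E l 0 = 0 \<and>
        (\<forall>t. E l (Suc t) = E l t - P l t + (if S l t then K l else 0)))"

text \<open>Queue dynamics.  Q a b t is the type-b (destined to b) backlog at node a.
  Data of type b that reaches b leaves the network, so Q b b t = 0.\<close>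
definition queue_dyn :: "('n::finite \<times> 'n) set \<Rightarrow> ('n \<Rightarrow> 'n \<Rightarrow> nat \<Rightarrow> real)
    \<Rightarrow> ('n \<Rightarrow> 'n \<times> 'n \<Rightarrow> nat \<Rightarrow> real) \<Rightarrow> ('n \<Rightarrow> 'n \<Rightarrow> nat \<Rightarrow> real) \<Rightarrow> bool" where
  "queue_dyn Lk R M Q \<longleftrightarrow>
     (\<forall>a b. Q a b 0 = 0) \<and> (\<forall>b t. Q b b t = 0) \<and>
     (\<forall>a b t. a \<noteq> b \<longrightarrow>
        Q a b (Suc t) = Q a b t + R a b t + (\<Sum>c\<in>Nin Lk a. M b (c, a) t)
                                          - (\<Sum>c\<in>Nout Lk a. M b (a, c) t))"

definition stable :: "('n::finite \<Rightarrow> 'n \<Rightarrow> nat \<Rightarrow> real) \<Rightarrow> bool" where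
  "stable Q \<longleftrightarrow>
     limsup (\<lambda>t. ereal ((1 / real t) * (\<Sum>\<tau><t. \<Sum>a\<in>UNIV. \<Sum>b\<in>UNIV. Q a b \<tau>))) < \<infinity>"

definition ravg :: "('n \<Rightarrow> 'n \<Rightarrow> nat \<Rightarrow> real) \<Rightarrow> 'n \<Rightarrow> 'n \<Rightarrow> nat \<Rightarrow> real" where
  "ravg R a b \<tau> = (1 / real \<tau>) * (\<Sum>t<\<tau>. R a b t)"

definition feasible_policy ::
  "('n::finite \<times> 'n) set \<Rightarrow> ('n \<times> 'n \<Rightarrow> real) \<Rightarrow> ('n \<times> 'n \<Rightarrow> real \<Rightarrow> real)
   \<Rightarrow> real \<Rightarrow> real
   \<Rightarrow> ('n \<times> 'n \<Rightarrow> nat \<Rightarrow> bool) \<Rightarrow> ('n \<times> 'n \<Rightarrow> nat \<Rightarrow> real) \<Rightarrow> ('n \<times> 'n \<Rightarrow> nat \<Rightarrow> real)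
   \<Rightarrow> ('n \<Rightarrow> 'n \<Rightarrow> nat \<Rightarrow> real) \<Rightarrow> ('n \<Rightarrow> 'n \<times> 'n \<Rightarrow> nat \<Rightarrow> real)
   \<Rightarrow> ('n \<Rightarrow> 'n \<Rightarrow> nat \<Rightarrow> real) \<Rightarrow> bool" where
  "feasible_policy Lk K mu Rmax Pmax S E P R M Q \<longleftrightarrow>
     key_dyn Lk K S E P \<and>
     (\<forall>l\<in>Lk. \<forall>t. 0 \<le> P l t \<and> P l t \<le> Pmax \<and> P l t \<le> E l t) \<and>
     (\<forall>a b t. 0 \<le> R a b t \<and> R a b t \<le> Rmax) \<and>
     (\<forall>l\<in>Lk. \<forall>t. (\<forall>b. 0 \<le> M b l t) \<and> (\<Sum>b\<in>UNIV. M b l t) \<le> mu l (P l t)) \<and>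
     queue_dyn Lk R M Q \<and>
     (\<forall>a b t. 0 \<le> Q a b t) \<and>
     stable Q"

definition achievable ::
  "('n::finite \<times> 'n) set \<Rightarrow> ('n \<times> 'n \<Rightarrow> real) \<Rightarrow> ('n \<times> 'n \<Rightarrow> real \<Rightarrow> real)
   \<Rightarrow> real \<Rightarrow> real \<Rightarrow> ('n \<Rightarrow> 'n \<Rightarrow> real) \<Rightarrow> bool" where
  "achievable Lk K mu Rmax Pmax r \<longleftrightarrow>
     (\<exists>S E P R M Q. feasible_policy Lk K mu Rmax Pmax S E P R M Q \<and>
        (\<forall>a b. (\<lambda>\<tau>. ravg R a b \<tau>) \<longlonglongrightarrow> r a b))"

definition Uopt ::
  "('n::finite \<times> 'n) set \<Rightarrow> ('n \<times> 'n \<Rightarrow> real) \<Rightarrow> ('n \<times> 'n \<Rightarrow> real \<Rightarrow> real)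
   \<Rightarrow> real \<Rightarrow> real \<Rightarrow> ('n \<Rightarrow> 'n \<Rightarrow> real \<Rightarrow> real) \<Rightarrow> real" where
  "Uopt Lk K mu Rmax Pmax U =
     (SUP r\<in>{r. achievable Lk K mu Rmax Pmax r}. \<Sum>a\<in>UNIV. \<Sum>b\<in>UNIV. U a b (r a b))"

definition Wb :: "real \<Rightarrow> ('n \<Rightarrow> 'n \<Rightarrow> nat \<Rightarrow> real) \<Rightarrow> 'n \<Rightarrow> 'n \<times> 'n \<Rightarrow> nat \<Rightarrow> real" where
  "Wb \<gamma> Q b l t = max (Q (fst l) b t - Q (snd l) b t - \<gamma>) 0"

definition Wl :: "real \<Rightarrow> ('n::finite \<Rightarrow> 'n \<Rightarrow> nat \<Rightarrow> real) \<Rightarrow> 'n \<times> 'n \<Rightarrow> nat \<Rightarrow> real" where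
  "Wl \<gamma> Q l t = Max (range (\<lambda>b. Wb \<gamma> Q b l t))"

text \<open>A trajectory generated by the utility optimization algorithm (steps (1)--(5));
  any choice among maximizers is allowed.\<close>
definition algo_run ::
  "('n::finite \<times> 'n) set \<Rightarrow> ('n \<times> 'n \<Rightarrow> real) \<Rightarrow> ('n \<times> 'n \<Rightarrow> real \<Rightarrow> real)
   \<Rightarrow> ('n \<Rightarrow> 'n \<Rightarrow> real \<Rightarrow> real) \<Rightarrow> real \<Rightarrow> real \<Rightarrow> real \<Rightarrow> real \<Rightarrow> real \<Rightarrow> real
   \<Rightarrow> ('n \<times> 'n \<Rightarrow> nat \<Rightarrow> bool) \<Rightarrow> ('n \<times> 'n \<Rightarrow> nat \<Rightarrow> real) \<Rightarrow> ('n \<times> 'n \<Rightarrow> nat \<Rightarrow> real)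
   \<Rightarrow> ('n \<Rightarrow> 'n \<Rightarrow> nat \<Rightarrow> real) \<Rightarrow> ('n \<Rightarrow> 'n \<times> 'n \<Rightarrow> nat \<Rightarrow> real)
   \<Rightarrow> ('n \<Rightarrow> 'n \<Rightarrow> nat \<Rightarrow> real) \<Rightarrow> bool" where
  "algo_run Lk K mu U V \<delta> \<beta> Rmax Pmax mumax S E P R M Q \<longleftrightarrow>
     (let \<gamma> = gam Lk Rmax mumax; \<theta> = theta \<delta> \<beta> V Pmax in
     key_dyn Lk K S E P \<and>
     \<comment> \<open>(1) key generation\<close>
     (\<forall>l\<in>Lk. \<forall>t. S l t \<longleftrightarrow> E l t < \<theta>) \<and>
     \<comment> \<open>(2) admission control\<close>
     (\<forall>a b t. 0 \<le> R a b t \<and> R a b t \<le> Rmax \<and>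
        (\<forall>x\<in>{0..Rmax}. V * U a b x - Q a b t * x \<le> V * U a b (R a b t) - Q a b t * R a b t)) \<and>
     \<comment> \<open>(3) key consumption\<close>
     (\<forall>t. (\<forall>l\<in>Lk. 0 \<le> P l t \<and> P l t \<le> Pmax \<and> P l t \<le> E l t) \<and>
        (\<forall>P'. (\<forall>l\<in>Lk. 0 \<le> P' l \<and> P' l \<le> Pmax \<and> P' l \<le> E l t) \<longrightarrow>
           (\<Sum>l\<in>Lk. mu l (P' l) * Wl \<gamma> Q l t + (E l t - \<theta>) * P' l)
             \<le> (\<Sum>l\<in>Lk. mu l (P l t) * Wl \<gamma> Q l t + (E l t - \<theta>) * P l t))) \<and>
     \<comment> \<open>(4) routing\<close>
     (\<forall>l\<in>Lk. \<forall>t. \<exists>bs. (\<forall>b. Wb \<gamma> Q b l t \<le> Wb \<gamma> Q bs l t) \<and>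
        (\<forall>b. M b l t = (if b = bs \<and> Wb \<gamma> Q bs l t > 0 then mu l (P l t) else 0))) \<and>
     \<comment> \<open>(5) queue update\<close>
     queue_dyn Lk R M Q)"

end

theory Submission
  imports Defs
begin

text \<open>Drift-plus-penalty argument with the Lyapunov function
  \<open>\<Phi>(t) = \<Sum> Q\<^sup>2 / 2 + \<Sum>\<^sub>l (E\<^sub>l - \<theta>)\<^sup>2 / 2\<close>.
  Every backlog of the algorithm stays in \<open>[0, V \<beta> + \<gamma>]\<close>: data crosses a link only when the
  backlog gap exceeds \<open>\<gamma>\<close>, and admission stops above \<open>V \<beta>\<close>.  In each slot the algorithm
  maximises a lower bound on \<open>V \<cdot> utility - \<Delta>\<Phi>\<close>, so comparing it with the time averages
  over \<open>[0, T)\<close> of a stable feasible policy with rates \<open>r\<close> gives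
  \<open>V \<Sum> U(R(t)) \<ge> V \<Sum> U(r) + \<Delta>\<Phi> - Btilde - (V \<beta> + \<gamma>) dev(T)\<close>, where \<open>dev(T)\<close> collects
  \<open>Q'(T) / T\<close> and the distance of the averaged rates from \<open>r\<close>.  Telescoping and Jensen's
  inequality bound the utility of the averaged rates up to \<open>O(1/\<tau>)\<close>; stability makes
  \<open>dev(T)\<close> small for suitable \<open>T\<close>, and taking the supremum over achievable \<open>r\<close> ends the proof.\<close>

section \<open>Concave utilities and time averages\<close>

lemma has_real_derivative_at_0_quotient:
  fixes u :: "real \<Rightarrow> real"
  assumes "(u has_real_derivative d) (at 0 within {0..})"
  shows "((\<lambda>y. (u y - u 0) / y) \<longlongrightarrow> d) (at_right 0)"
  using assms unfolding has_field_derivative_iff at_within_Ici_at_right by simp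

lemma mono_on_derivative_at_0_nonneg:
  fixes u :: "real \<Rightarrow> real"
  assumes "(u has_real_derivative d) (at 0 within {0..})" and "mono_on {0..} u"
  shows "d \<ge> 0"
proof (rule tendsto_lowerbound[OF has_real_derivative_at_0_quotient[OF assms(1)]])
  show "\<forall>\<^sub>F x in at_right 0. 0 \<le> (u x - u 0) / x"
    unfolding eventually_at_right_field
    by (rule exI[of _ 1]) (auto intro!: divide_nonneg_pos mono_onD[OF assms(2)])
qed simp

lemma concave_on_le_tangent_at_0:
  fixes u :: "real \<Rightarrow> real"
  assumes d: "(u has_real_derivative d) (at 0 within {0..})" and c: "concave_on {0..} u"
    and x: "x \<ge> 0"
  shows "u x \<le> u 0 + d * x"
proof (cases "x = 0")
  case False
  then have xp: "x > 0" using x by simp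
  have "(u x - u 0) / x \<le> (u y - u 0) / y" if y: "0 < y" "y < x" for y
  proof -
    define s where "s = y / x"
    have s: "0 \<le> s" "s \<le> 1" using y by (auto simp: s_def)
    have "(1 - s) * u 0 + s * u x \<le> u ((1 - s) *\<^sub>R 0 + s *\<^sub>R x)"
      by (rule concave_onD[OF c s]) (use x in auto)
    also have "(1 - s) *\<^sub>R 0 + s *\<^sub>R x = y" using xp by (simp add: s_def)
    finally have "s * (u x - u 0) \<le> u y - u 0" by (simp add: algebra_simps)
    then have "s * (u x - u 0) / y \<le> (u y - u 0) / y" using y by (simp add: divide_right_mono)
    moreover have "s * (u x - u 0) / y = (u x - u 0) / x" using y xp by (simp add: s_def)
    ultimately show ?thesis by simp
  qed
  then have "\<forall>\<^sub>F y in at_right 0. (u x - u 0) / x \<le> (u y - u 0) / y"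
    unfolding eventually_at_right_field using xp by blast
  then have "(u x - u 0) / x \<le> d"
    by (rule tendsto_lowerbound[OF has_real_derivative_at_0_quotient[OF d]]) simp
  then show ?thesis using xp by (simp add: divide_le_eq algebra_simps)
qed simp

definition avg :: "nat \<Rightarrow> (nat \<Rightarrow> real) \<Rightarrow> real" where
  "avg T f = (1 / real T) * (\<Sum>s<T. f s)"

lemma ravg_eq_avg: "ravg R a b \<tau> = avg \<tau> (R a b)"
  by (simp add: ravg_def avg_def)

lemma avg_nonneg: "(\<And>s. s < T \<Longrightarrow> 0 \<le> f s) \<Longrightarrow> 0 \<le> avg T f"
  unfolding avg_def by (intro mult_nonneg_nonneg sum_nonneg) auto

lemma avg_mono: "(\<And>s. s < T \<Longrightarrow> f s \<le> g s) \<Longrightarrow> avg T f \<le> avg T g"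
  unfolding avg_def by (intro mult_left_mono sum_mono) auto

lemma avg_const: "T > 0 \<Longrightarrow> avg T (\<lambda>s. c) = c"
  by (simp add: avg_def)

lemma avg_sum: "avg T (\<lambda>s. \<Sum>b\<in>B. f b s) = (\<Sum>b\<in>B. avg T (f b))"
  unfolding avg_def by (simp add: sum_distrib_left sum.swap[of _ B])

lemma avg_add: "avg T (\<lambda>s. f s + g s) = avg T f + avg T g"
  unfolding avg_def by (simp add: sum.distrib ring_distribs)

lemma avg_diff: "avg T (\<lambda>s. f s - g s) = avg T f - avg T g"
  unfolding avg_def by (simp add: sum_subtractf right_diff_distrib)

lemma avg_cmult: "avg T (\<lambda>s. c * f s) = c * avg T f"
  unfolding avg_def by (simp add: sum_distrib_left)

lemma avg_increments: "avg T (\<lambda>s. q (Suc s) - q s) = (q T - q 0) / real T"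
  unfolding avg_def by (simp add: sum_lessThan_telescope)

lemma concave_on_avg_le:
  fixes u :: "real \<Rightarrow> real"
  assumes c: "concave_on {0..} u" and T: "T > 0" and nonneg: "\<And>s. s < T \<Longrightarrow> f s \<ge> 0"
  shows "avg T (\<lambda>s. u (f s)) \<le> u (avg T f)"
proof -
  have "convex_on {0..} (\<lambda>x. - u x)" using c by (simp add: concave_on_def)
  then have "- u (\<Sum>s<T. (1 / real T) *\<^sub>R f s) \<le> (\<Sum>s<T. (1 / real T) * - u (f s))"
    by (rule convex_on_sum[rotated 2]) (use T nonneg in auto)
  then show ?thesis by (simp add: avg_def sum_negf sum_distrib_left)
qed

lemma avg_frequently_small:
  assumes bounded: "limsup (\<lambda>t. ereal (avg t q)) < \<infinity>"
    and nonneg: "\<And>t. 0 \<le> q t" and eta: "\<eta> > 0"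
  shows "\<exists>T\<ge>T0. q T < \<eta> * real T"
proof (rule ccontr)
  assume "\<not> ?thesis"
  then have big: "\<eta> * real T \<le> q T" if "T \<ge> T0" for T
    using that by (meson not_less)
  obtain n :: nat where "limsup (\<lambda>t. ereal (avg t q)) < ereal (real n)"
    using bounded less_PInf_Ex_of_nat by (metis less_irrefl)
  then have "\<forall>\<^sub>F t in sequentially. ereal (avg t q) < ereal (real n)"
    by (rule Limsup_lessD)
  then obtain N0 where N0: "\<And>t. t \<ge> N0 \<Longrightarrow> avg t q < real n"
    unfolding eventually_sequentially by auto
  obtain m :: nat where m: "real m > 2 * real n / \<eta>" using reals_Archimedean2 by blast
  define k where "k = max (max T0 1) (max N0 m)"
  have k: "k \<ge> T0" "real k > 0" "k \<ge> N0" "real k > 2 * real n / \<eta>"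
    using m by (auto simp: k_def)
  \<comment> \<open>On \<open>[k, 2k)\<close> each term is at least \<open>\<eta> k\<close>, so the average over \<open>[0, 2k)\<close> is at least \<open>\<eta> k / 2\<close>.\<close>
  have "(\<Sum>\<tau>\<in>{k..<2 * k}. \<eta> * real k) \<le> (\<Sum>\<tau>\<in>{k..<2 * k}. q \<tau>)"
  proof (rule sum_mono)
    fix \<tau> assume "\<tau> \<in> {k..<2 * k}"
    then have "\<eta> * real k \<le> \<eta> * real \<tau>" "\<tau> \<ge> T0" using eta k by auto
    then show "\<eta> * real k \<le> q \<tau>" using big by force
  qed
  also have "\<dots> \<le> (\<Sum>\<tau><2 * k. q \<tau>)"
    by (rule sum_mono2) (use nonneg in auto)
  also have "\<dots> < 2 * real k * real n"
    using N0[of "2 * k"] k by (simp add: avg_def field_simps)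
  finally have "\<eta> * real k < 2 * real n" using k by (simp add: power2_eq_square)
  then show False using k(4) eta by (simp add: field_simps)
qed

lemma liminf_ge_if_ge_minus_reciprocal:
  fixes f :: "nat \<Rightarrow> real"
  assumes "\<And>\<tau>. \<tau> > 0 \<Longrightarrow> c - A / real \<tau> \<le> f \<tau>"
  shows "ereal c \<le> liminf (\<lambda>\<tau>. ereal (f \<tau>))"
proof -
  have "(\<lambda>\<tau>. ereal (c - A / real \<tau>)) \<longlonglongrightarrow> ereal (c - 0)"
    by (intro tendsto_intros lim_const_over_n)
  then have "liminf (\<lambda>\<tau>. ereal (c - A / real \<tau>)) = ereal c"
    by (simp add: lim_imp_Liminf)
  moreover have "liminf (\<lambda>\<tau>. ereal (c - A / real \<tau>)) \<le> liminf (\<lambda>\<tau>. ereal (f \<tau>))"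
    by (intro Liminf_mono) (use assms in \<open>auto simp: eventually_sequentially intro!: exI[of _ 1]\<close>)
  ultimately show ?thesis by simp
qed

section \<open>Sums over the links of a network\<close>

lemma links_eq_Sigma_Nout: "Lk = Sigma UNIV (Nout Lk)"
  by (auto simp: Nout_def)

lemma sum_links_by_tail:
  fixes Lk :: "('n::finite \<times> 'n) set"
  shows "(\<Sum>l\<in>Lk. h l) = (\<Sum>a\<in>UNIV. \<Sum>c\<in>Nout Lk a. h (a, c))"
  by (subst links_eq_Sigma_Nout) (simp add: sum.Sigma)

lemma sum_links_by_head:
  fixes Lk :: "('n::finite \<times> 'n) set"
  shows "(\<Sum>l\<in>Lk. h l) = (\<Sum>c\<in>UNIV. \<Sum>a\<in>Nin Lk c. h (a, c))"
proof -
  have "Nout Lk a = {c\<in>UNIV. (a, c) \<in> Lk}" "Nin Lk c = {a\<in>UNIV. (a, c) \<in> Lk}" for a c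
    by (auto simp: Nout_def Nin_def)
  then show ?thesis
    unfolding sum_links_by_tail
    using sum.swap_restrict[of UNIV UNIV "\<lambda>a c. h (a, c)" "\<lambda>a c. (a, c) \<in> Lk"] by simp
qed

lemma sum_links_potential_difference:
  fixes Lk :: "('n::finite \<times> 'n) set" and F :: "'n \<Rightarrow> 'n \<times> 'n \<Rightarrow> real"
  shows "(\<Sum>l\<in>Lk. \<Sum>b\<in>UNIV. F b l * (Q (fst l) b - Q (snd l) b))
       = (\<Sum>a\<in>UNIV. \<Sum>b\<in>UNIV. Q a b * ((\<Sum>c\<in>Nout Lk a. F b (a, c)) - (\<Sum>c\<in>Nin Lk a. F b (c, a))))"
proof -
  have "(\<Sum>l\<in>Lk. \<Sum>b\<in>UNIV. F b l * Q (fst l) b)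
      = (\<Sum>a\<in>UNIV. \<Sum>b\<in>UNIV. Q a b * (\<Sum>c\<in>Nout Lk a. F b (a, c)))"
    by (subst sum_links_by_tail) (simp add: sum_distrib_left sum.swap[of _ "Nout Lk _"] mult.commute)
  moreover have "(\<Sum>l\<in>Lk. \<Sum>b\<in>UNIV. F b l * Q (snd l) b)
      = (\<Sum>a\<in>UNIV. \<Sum>b\<in>UNIV. Q a b * (\<Sum>c\<in>Nin Lk a. F b (c, a)))"
    by (subst sum_links_by_head) (simp add: sum_distrib_left sum.swap[of _ "Nin Lk _"] mult.commute)
  ultimately show ?thesis
    by (simp add: right_diff_distrib sum_subtractf)
qed

lemma card_Nin_le_dmax: "card (Nin (Lk::('n::finite \<times> 'n) set) a) \<le> dmax Lk"
  and card_Nout_le_dmax: "card (Nout (Lk::('n::finite \<times> 'n) set) a) \<le> dmax Lk"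
proof -
  have "max (card (Nin Lk a)) (card (Nout Lk a)) \<le> dmax Lk"
    unfolding dmax_def by (rule Max_ge) auto
  then show "card (Nin Lk a) \<le> dmax Lk" "card (Nout Lk a) \<le> dmax Lk" by auto
qed

lemma card_links_le:
  fixes Lk :: "('n::finite \<times> 'n) set"
  shows "card Lk \<le> CARD('n) * dmax Lk"
proof -
  have "card Lk = (\<Sum>a\<in>UNIV. card (Nout Lk a))"
    by (subst links_eq_Sigma_Nout) simp
  also have "\<dots> \<le> (\<Sum>a\<in>(UNIV::'n set). dmax Lk)"
    by (intro sum_mono card_Nout_le_dmax)
  finally show ?thesis by simp
qed

lemma sum_le_card_mult:
  fixes f :: "'a \<Rightarrow> real"
  assumes "finite A" "\<And>x. x \<in> A \<Longrightarrow> f x \<le> c" "0 \<le> c" "card A \<le> d"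
  shows "(\<Sum>x\<in>A. f x) \<le> real d * c"
proof -
  have "(\<Sum>x\<in>A. f x) \<le> real (card A) * c" using sum_bounded_above[of A f c] assms by auto
  also have "\<dots> \<le> real d * c" using assms by (intro mult_right_mono) auto
  finally show ?thesis .
qed

lemma half_square_increment: "((x::real) + y)^2 / 2 - x^2 / 2 = x * y + y^2 / 2"
  by (simp add: power2_sum add_divide_distrib)

lemma square_diff_le_sum_squares: "0 \<le> (u::real) \<Longrightarrow> 0 \<le> v \<Longrightarrow> (u - v)^2 \<le> u^2 + v^2"
  by (simp add: power2_diff)

lemma square_sum_plus_square_le: "((u::real) + v)^2 + v^2 \<le> 2 * u^2 + 3 * v^2"
proof -
  have "0 \<le> (u - v)^2" by simp
  then show ?thesis by (simp add: power2_diff power2_sum)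
qed

section \<open>Trajectories of the algorithm\<close>

locale algo_trajectory =
  fixes Lk :: "('n::finite \<times> 'n) set"
    and K :: "'n \<times> 'n \<Rightarrow> real" and mu :: "'n \<times> 'n \<Rightarrow> real \<Rightarrow> real"
    and U :: "'n \<Rightarrow> 'n \<Rightarrow> real \<Rightarrow> real" and dU0 :: "'n \<Rightarrow> 'n \<Rightarrow> real"
    and V \<delta> \<beta> Rmax Pmax Kmax mumax :: real
    and S :: "'n \<times> 'n \<Rightarrow> nat \<Rightarrow> bool" and E P :: "'n \<times> 'n \<Rightarrow> nat \<Rightarrow> real"
    and R Q :: "'n \<Rightarrow> 'n \<Rightarrow> nat \<Rightarrow> real" and M :: "'n \<Rightarrow> 'n \<times> 'n \<Rightarrow> nat \<Rightarrow> real"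
  assumes params: "V > 0" "\<delta> > 0" "Rmax \<ge> 0" "Pmax \<ge> 0" "Kmax \<ge> 0" "mumax \<ge> 0"
    and keygen: "\<forall>l\<in>Lk. 0 \<le> K l \<and> K l \<le> Kmax"
    and rate: "\<forall>l\<in>Lk. \<forall>p\<in>{0..Pmax}. 0 \<le> mu l p \<and> mu l p \<le> mumax \<and> mu l p \<le> \<delta> * p"
    and concave: "\<forall>a b. concave_on {0..} (U a b)"
    and nondecr: "\<forall>a b. mono_on {0..} (U a b)"
    and deriv0: "\<forall>a b. (U a b has_real_derivative dU0 a b) (at 0 within {0..})"
    and beta: "\<beta> = Max (range (\<lambda>(a, b). dU0 a b))"
    and run: "algo_run Lk K mu U V \<delta> \<beta> Rmax Pmax mumax S E P R M Q"
begin

definition "\<gamma> = gam Lk Rmax mumax"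
definition "\<theta> = theta \<delta> \<beta> V Pmax"
abbreviation "d \<equiv> real (dmax Lk)"
definition "W l t = Wl \<gamma> Q l t"
definition "inflow a b t = (\<Sum>c\<in>Nin Lk a. M b (c, a) t)"
definition "outflow a b t = (\<Sum>c\<in>Nout Lk a. M b (a, c) t)"

lemma key_init: "l \<in> Lk \<Longrightarrow> E l 0 = 0"
  and key_step: "l \<in> Lk \<Longrightarrow> E l (Suc t) = E l t - P l t + (if S l t then K l else 0)"
  using run by (auto simp: algo_run_def key_dyn_def Let_def)

lemma key_generation_iff: "l \<in> Lk \<Longrightarrow> S l t \<longleftrightarrow> E l t < \<theta>"
  using run by (auto simp: algo_run_def \<theta>_def Let_def)

lemma admitted_nonneg: "0 \<le> R a b t" and admitted_le: "R a b t \<le> Rmax"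
  using run by (auto simp: algo_run_def Let_def)

lemma admission_optimal:
  "0 \<le> x \<Longrightarrow> x \<le> Rmax \<Longrightarrow> V * U a b x - Q a b t * x \<le> V * U a b (R a b t) - Q a b t * R a b t"
  using run by (auto simp: algo_run_def Let_def)

lemma consumed_nonneg: "l \<in> Lk \<Longrightarrow> 0 \<le> P l t"
  and consumed_le_Pmax: "l \<in> Lk \<Longrightarrow> P l t \<le> Pmax"
  and consumed_le_key: "l \<in> Lk \<Longrightarrow> P l t \<le> E l t"
  using run by (auto simp: algo_run_def Let_def)

lemma consumption_optimal:
  "\<forall>l\<in>Lk. 0 \<le> P' l \<and> P' l \<le> Pmax \<and> P' l \<le> E l t \<Longrightarrow>
   (\<Sum>l\<in>Lk. mu l (P' l) * W l t + (E l t - \<theta>) * P' l)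
     \<le> (\<Sum>l\<in>Lk. mu l (P l t) * W l t + (E l t - \<theta>) * P l t)"
  using run unfolding algo_run_def Let_def W_def \<gamma>_def \<theta>_def by blast

lemma routing_choice:
  "l \<in> Lk \<Longrightarrow> \<exists>bs. (\<forall>b. Wb \<gamma> Q b l t \<le> Wb \<gamma> Q bs l t) \<and>
     (\<forall>b. M b l t = (if b = bs \<and> Wb \<gamma> Q bs l t > 0 then mu l (P l t) else 0))"
  using run unfolding algo_run_def Let_def \<gamma>_def by blast

lemma queue_init: "Q a b 0 = 0" and queue_at_destination: "Q b b t = 0"
  and queue_step: "a \<noteq> b \<Longrightarrow> Q a b (Suc t) = Q a b t + R a b t + inflow a b t - outflow a b t"
  using run by (auto simp: algo_run_def Let_def queue_dyn_def inflow_def outflow_def)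

lemma gamma_eq: "\<gamma> = Rmax + d * mumax"
  by (simp add: \<gamma>_def gam_def)

lemma gamma_ge_Rmax: "Rmax \<le> \<gamma>" and gamma_ge_flow: "d * mumax \<le> \<gamma>"
  using params by (simp_all add: gamma_eq)

lemma gamma_nonneg: "\<gamma> \<ge> 0"
  using params gamma_ge_Rmax by linarith

lemma theta_eq: "\<theta> = \<delta> * \<beta> * V + Pmax"
  by (simp add: \<theta>_def theta_def)

lemma dU0_nonneg: "dU0 a b \<ge> 0"
  using mono_on_derivative_at_0_nonneg deriv0 nondecr by blast

lemma dU0_le_beta: "dU0 a b \<le> \<beta>"
proof -
  have "(\<lambda>(a, b). dU0 a b) (a, b) \<le> Max (range (\<lambda>(a, b). dU0 a b))"
    by (rule Max_ge) auto
  then show ?thesis using beta by simp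
qed

lemma beta_nonneg: "\<beta> \<ge> 0"
  using dU0_nonneg dU0_le_beta order_trans by blast

lemma rate_bounds:
  "l \<in> Lk \<Longrightarrow> 0 \<le> p \<Longrightarrow> p \<le> Pmax \<Longrightarrow> 0 \<le> mu l p \<and> mu l p \<le> mumax \<and> mu l p \<le> \<delta> * p"
  using rate by auto

lemma flow_bounds: "l \<in> Lk \<Longrightarrow> 0 \<le> M b l t \<and> M b l t \<le> mumax"
proof -
  assume l: "l \<in> Lk"
  obtain bs where "\<forall>b. M b l t = (if b = bs \<and> Wb \<gamma> Q bs l t > 0 then mu l (P l t) else 0)"
    using routing_choice[OF l] by blast
  then show ?thesis
    using rate_bounds[OF l consumed_nonneg[OF l] consumed_le_Pmax[OF l]] params by auto
qed

lemma inflow_nonneg: "0 \<le> inflow a b t"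
  unfolding inflow_def by (rule sum_nonneg) (use flow_bounds in \<open>auto simp: Nin_def\<close>)

lemma inflow_le: "inflow a b t \<le> d * mumax"
  unfolding inflow_def
  by (rule sum_le_card_mult) (use flow_bounds params card_Nin_le_dmax in \<open>auto simp: Nin_def\<close>)

lemma outflow_nonneg: "0 \<le> outflow a b t"
  unfolding outflow_def by (rule sum_nonneg) (use flow_bounds in \<open>auto simp: Nout_def\<close>)

lemma outflow_le: "outflow a b t \<le> d * mumax"
  unfolding outflow_def
  by (rule sum_le_card_mult) (use flow_bounds params card_Nout_le_dmax in \<open>auto simp: Nout_def\<close>)

text \<open>Admission costs \<open>Q a b t\<close> per unit, while by concavity the utility gains at most
  \<open>dU0 a b \<le> \<beta>\<close> per unit.\<close>
lemma admission_stops_above: "Q a b t > V * \<beta> \<Longrightarrow> R a b t = 0"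
proof (rule ccontr)
  assume q: "Q a b t > V * \<beta>" and "R a b t \<noteq> 0"
  then have pos: "R a b t > 0" using admitted_nonneg[of a b t] by linarith
  have "U a b (R a b t) \<le> U a b 0 + dU0 a b * R a b t"
    using concave_on_le_tangent_at_0 deriv0 concave admitted_nonneg by blast
  then have "V * U a b (R a b t) \<le> V * U a b 0 + V * dU0 a b * R a b t"
    using params by (simp add: mult_left_mono distrib_left mult.assoc flip: distrib_left)
  moreover have "V * U a b 0 \<le> V * U a b (R a b t) - Q a b t * R a b t"
    using admission_optimal[of 0 a b t] params by simp
  ultimately have "Q a b t * R a b t \<le> V * dU0 a b * R a b t" by linarith
  also have "\<dots> \<le> V * \<beta> * R a b t"
    using dU0_le_beta params pos by (intro mult_right_mono mult_left_mono) auto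
  finally show False using mult_strict_right_mono[OF q pos] by linarith
qed

lemma flow_imp_backlog_gap:
  assumes l: "l \<in> Lk" and flow: "M b l t \<noteq> 0" shows "Q (fst l) b t - Q (snd l) b t > \<gamma>"
proof -
  obtain bs where "\<forall>b. M b l t = (if b = bs \<and> Wb \<gamma> Q bs l t > 0 then mu l (P l t) else 0)"
    using routing_choice[OF l] by blast
  with flow have "Wb \<gamma> Q b l t > 0" by (auto split: if_splits)
  then show ?thesis by (simp add: Wb_def less_max_iff_disj)
qed

lemma queue_next_nonneg:
  assumes nonneg: "\<And>c. 0 \<le> Q c b t" shows "0 \<le> Q a b (Suc t)"
proof (cases "a = b")
  case True then show ?thesis using queue_at_destination by simp
next
  case ab: False
  have "outflow a b t \<le> Q a b t + R a b t + inflow a b t"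
  proof (cases "outflow a b t = 0")
    case True
    then show ?thesis using nonneg[of a] admitted_nonneg[of a b t] inflow_nonneg[of a b t] by simp
  next
    case False
    then obtain c where c: "c \<in> Nout Lk a" "M b (a, c) t \<noteq> 0"
      unfolding outflow_def by (meson sum.neutral)
    then have "Q a b t > \<gamma>"
      using flow_imp_backlog_gap[of "(a, c)" b t] nonneg[of c] by (simp add: Nout_def)
    then show ?thesis
      using outflow_le[of a b t] gamma_ge_flow admitted_nonneg[of a b t] inflow_nonneg[of a b t]
      by linarith
  qed
  then show ?thesis using queue_step[OF ab, of t] by simp
qed

lemma queue_next_le:
  assumes le: "\<And>c. Q c b t \<le> V * \<beta> + \<gamma>" shows "Q a b (Suc t) \<le> V * \<beta> + \<gamma>"
proof (cases "a = b")
  case True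
  then show ?thesis using queue_at_destination params beta_nonneg gamma_nonneg by simp
next
  case ab: False
  have "Q a b t + R a b t + inflow a b t \<le> V * \<beta> + \<gamma>"
  proof (cases "inflow a b t = 0")
    case False
    then obtain c where c: "c \<in> Nin Lk a" "M b (c, a) t \<noteq> 0"
      unfolding inflow_def by (meson sum.neutral)
    then have "Q a b t < V * \<beta>"
      using flow_imp_backlog_gap[of "(c, a)" b t] le[of c] by (simp add: Nin_def)
    then show ?thesis using admitted_le[of a b t] inflow_le[of a b t] gamma_eq by linarith
  next
    case True
    show ?thesis
    proof (cases "Q a b t > V * \<beta>")
      case True
      then show ?thesis using admission_stops_above \<open>inflow a b t = 0\<close> le[of a] by simp
    next
      case False
      then show ?thesis using \<open>inflow a b t = 0\<close> admitted_le[of a b t] gamma_ge_Rmax by linarith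
    qed
  qed
  then show ?thesis using queue_step[OF ab, of t] outflow_nonneg[of a b t] by linarith
qed

lemma queue_bounds: "0 \<le> Q a b t \<and> Q a b t \<le> V * \<beta> + \<gamma>"
proof (induction t arbitrary: a)
  case 0
  then show ?case using queue_init params beta_nonneg gamma_nonneg by simp
next
  case (Suc t)
  then show ?case using queue_next_nonneg queue_next_le by blast
qed

lemma queue_nonneg: "0 \<le> Q a b t" and queue_le: "Q a b t \<le> V * \<beta> + \<gamma>"
  using queue_bounds by auto

lemma Wb_nonneg: "Wb \<gamma> Q b l t \<ge> 0"
  by (simp add: Wb_def)

lemma W_ge_Wb: "W l t \<ge> Wb \<gamma> Q b l t"
  unfolding W_def Wl_def by (rule Max_ge) auto

lemma W_ge_backlog_gap: "W l t \<ge> Q (fst l) b t - Q (snd l) b t - \<gamma>"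
  using W_ge_Wb[where b = b] by (simp add: Wb_def)

lemma W_nonneg: "W l t \<ge> 0"
  using W_ge_Wb Wb_nonneg order_trans by blast

lemma W_le: "W l t \<le> V * \<beta>"
proof -
  have "Wb \<gamma> Q b l t \<le> V * \<beta>" for b
    using queue_le[of "fst l" b t] queue_nonneg[of "snd l" b t] params beta_nonneg
    by (simp add: Wb_def)
  then show ?thesis unfolding W_def Wl_def by (subst Max_le_iff) auto
qed

lemma routing_attains_weight:
  assumes l: "l \<in> Lk"
  shows "mu l (P l t) * W l t \<le> (\<Sum>b\<in>UNIV. M b l t * (Q (fst l) b t - Q (snd l) b t))"
proof -
  obtain bs where bs: "\<forall>b. Wb \<gamma> Q b l t \<le> Wb \<gamma> Q bs l t"
    and M: "\<forall>b. M b l t = (if b = bs \<and> Wb \<gamma> Q bs l t > 0 then mu l (P l t) else 0)"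
    using routing_choice[OF l] by blast
  have W: "W l t = Wb \<gamma> Q bs l t"
    unfolding W_def Wl_def by (rule Max_eqI) (use bs in auto)
  show ?thesis
  proof (cases "Wb \<gamma> Q bs l t > 0")
    case True
    then have gap: "W l t \<le> Q (fst l) bs t - Q (snd l) bs t"
      using W gamma_nonneg by (simp add: Wb_def max_def split: if_splits)
    have "(\<Sum>b\<in>UNIV. M b l t * (Q (fst l) b t - Q (snd l) b t))
        = (\<Sum>b\<in>UNIV. if b = bs then mu l (P l t) * (Q (fst l) b t - Q (snd l) b t) else 0)"
      using M True by (intro sum.cong) auto
    also have "\<dots> = mu l (P l t) * (Q (fst l) bs t - Q (snd l) bs t)"
      by simp
    finally show ?thesis
      using gap rate_bounds[OF l consumed_nonneg[OF l] consumed_le_Pmax[OF l]]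
      by (simp add: mult_left_mono)
  next
    case False
    then show ?thesis using W M Wb_nonneg[of bs l t] by simp
  qed
qed

lemma key_nonneg: "l \<in> Lk \<Longrightarrow> 0 \<le> E l t"
  using consumed_nonneg consumed_le_key order_trans by blast

lemma consumption_link_optimal:
  assumes l0: "l0 \<in> Lk" and p: "0 \<le> p" "p \<le> Pmax" "p \<le> E l0 t"
  shows "mu l0 p * W l0 t + (E l0 t - \<theta>) * p \<le> mu l0 (P l0 t) * W l0 t + (E l0 t - \<theta>) * P l0 t"
proof -
  define g where "g l x = mu l x * W l t + (E l t - \<theta>) * x" for l x
  define P' where "P' = (\<lambda>l. P l t)(l0 := p)"
  have "\<forall>l\<in>Lk. 0 \<le> P' l \<and> P' l \<le> Pmax \<and> P' l \<le> E l t"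
    using p consumed_nonneg consumed_le_Pmax consumed_le_key by (auto simp: P'_def)
  from consumption_optimal[OF this] have "(\<Sum>l\<in>Lk. g l (P' l)) \<le> (\<Sum>l\<in>Lk. g l (P l t))"
    by (simp add: g_def)
  moreover have "(\<Sum>l\<in>Lk. g l (P' l)) = g l0 p + (\<Sum>l\<in>Lk - {l0}. g l (P l t))"
    using l0 by (simp add: sum.remove P'_def)
  moreover have "(\<Sum>l\<in>Lk. g l (P l t)) = g l0 (P l0 t) + (\<Sum>l\<in>Lk - {l0}. g l (P l t))"
    using l0 by (simp add: sum.remove)
  ultimately show ?thesis by (simp add: g_def)
qed

text \<open>The key availability constraint \<open>p \<le> E l t\<close> can be dropped: when \<open>E l t < Pmax\<close>, the choice
  \<open>\<theta> = \<delta> \<beta> V + Pmax\<close> makes the link objective nonpositive for every \<open>p\<close>, while the algorithm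
  does at least as well as \<open>p = 0\<close>.\<close>
lemma consumption_link_ge:
  assumes l: "l \<in> Lk" and p: "0 \<le> p" "p \<le> Pmax"
  shows "mu l p * W l t + (E l t - \<theta>) * p \<le> mu l (P l t) * W l t + (E l t - \<theta>) * P l t"
proof (cases "E l t \<ge> Pmax")
  case True
  then show ?thesis using p by (intro consumption_link_optimal[OF l]) auto
next
  case False
  have "0 \<le> mu l 0 * W l t + (E l t - \<theta>) * 0"
    using rate_bounds[OF l] params W_nonneg by simp
  also have "\<dots> \<le> mu l (P l t) * W l t + (E l t - \<theta>) * P l t"
    by (rule consumption_link_optimal[OF l]) (use params key_nonneg[OF l] in auto)
  finally have alg: "0 \<le> mu l (P l t) * W l t + (E l t - \<theta>) * P l t" .
  have "mu l p * W l t \<le> \<delta> * p * W l t"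
    using rate_bounds[OF l p] W_nonneg by (simp add: mult_right_mono)
  also have "\<dots> \<le> \<delta> * p * (V * \<beta>)"
    using W_le params p by (simp add: mult_left_mono)
  finally have "mu l p * W l t + (E l t - \<theta>) * p \<le> p * (E l t - Pmax)"
    by (simp add: theta_eq algebra_simps)
  also have "\<dots> \<le> 0" using False p by (simp add: mult_nonneg_nonpos)
  finally show ?thesis using alg by linarith
qed

text \<open>The generation rule \<open>S l t \<longleftrightarrow> E l t < \<theta>\<close> makes \<open>(E l t - \<theta>) (pb - generated key)\<close>
  nonnegative for every \<open>pb \<in> [0, K l]\<close>.\<close>
lemma key_drift_le:
  assumes l: "l \<in> Lk" and pb: "0 \<le> pb" "pb \<le> K l"
  shows "(E l (Suc t) - \<theta>)^2 / 2 - (E l t - \<theta>)^2 / 2 - (Pmax + Kmax)^2 / 2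
    \<le> (E l t - \<theta>) * (pb - P l t)"
proof -
  define G where "G = (if S l t then K l else 0)"
  have g: "0 \<le> G" "G \<le> Kmax" using keygen l by (auto simp: G_def)
  have generation: "0 \<le> (E l t - \<theta>) * (pb - G)"
    using key_generation_iff[OF l, of t] pb by (auto simp: G_def intro: mult_nonpos_nonpos)
  have "\<bar>G - P l t\<bar> \<le> Pmax + Kmax"
    using g consumed_nonneg[OF l, of t] consumed_le_Pmax[OF l, of t] by linarith
  then have increment: "(G - P l t)^2 \<le> (Pmax + Kmax)^2"
    by (metis abs_le_square_iff abs_of_nonneg abs_ge_zero order_trans)
  have "E l (Suc t) - \<theta> = (E l t - \<theta>) + (G - P l t)"
    using key_step[OF l] by (simp add: G_def)
  then have "(E l (Suc t) - \<theta>)^2 / 2 - (E l t - \<theta>)^2 / 2 = (E l t - \<theta>) * (G - P l t) + (G - P l t)^2 / 2"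
    by (simp only: half_square_increment)
  then show ?thesis using generation increment by (simp add: algebra_simps)
qed

lemma queue_drift_le:
  "Q a b (Suc t)^2 / 2 - Q a b t^2 / 2
     \<le> Q a b t * (R a b t + inflow a b t - outflow a b t) + (Rmax^2 + 3/2 * d^2 * mumax^2)"
proof (cases "a = b")
  case True then show ?thesis using queue_at_destination by simp
next
  case False
  define x where "x = R a b t + inflow a b t - outflow a b t"
  have arrivals: "0 \<le> R a b t + inflow a b t" "R a b t + inflow a b t \<le> Rmax + d * mumax"
    using admitted_nonneg admitted_le inflow_nonneg inflow_le by (auto intro: add_mono)
  have "x^2 \<le> (R a b t + inflow a b t)^2 + (outflow a b t)^2"
    unfolding x_def using arrivals outflow_nonneg by (intro square_diff_le_sum_squares) auto
  also have "\<dots> \<le> (Rmax + d * mumax)^2 + (d * mumax)^2"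
    using arrivals outflow_nonneg outflow_le admitted_le inflow_le by (intro add_mono power_mono) auto
  also have "\<dots> \<le> 2 * Rmax^2 + 3 * d^2 * mumax^2"
    using square_sum_plus_square_le[of Rmax "d * mumax"] by (simp add: power_mult_distrib)
  finally have "x^2 / 2 \<le> Rmax^2 + 3/2 * d^2 * mumax^2" by (simp add: algebra_simps)
  moreover have "Q a b (Suc t) = Q a b t + x"
    using queue_step[OF False, of t] by (simp add: x_def)
  then have "Q a b (Suc t)^2 / 2 - Q a b t^2 / 2 = Q a b t * x + x^2 / 2"
    by (simp only: half_square_increment)
  ultimately show ?thesis by (simp add: x_def)
qed

lemma admission_sum_ge:
  assumes r: "\<And>a b. 0 \<le> r a b \<and> r a b \<le> Rmax"
  shows "V * (\<Sum>a\<in>UNIV. \<Sum>b\<in>UNIV. U a b (r a b)) - (\<Sum>a\<in>UNIV. \<Sum>b\<in>UNIV. Q a b t * r a b)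
    \<le> V * (\<Sum>a\<in>UNIV. \<Sum>b\<in>UNIV. U a b (R a b t)) - (\<Sum>a\<in>UNIV. \<Sum>b\<in>UNIV. Q a b t * R a b t)"
proof -
  have "(\<Sum>a\<in>UNIV. \<Sum>b\<in>UNIV. V * U a b (r a b) - Q a b t * r a b)
      \<le> (\<Sum>a\<in>UNIV. \<Sum>b\<in>UNIV. V * U a b (R a b t) - Q a b t * R a b t)"
    by (intro sum_mono admission_optimal) (use r in auto)
  then show ?thesis by (simp add: sum_subtractf sum_distrib_left)
qed

lemma queue_drift_sum_le:
  "(\<Sum>a\<in>UNIV. \<Sum>b\<in>UNIV. Q a b (Suc t)^2) / 2 - (\<Sum>a\<in>UNIV. \<Sum>b\<in>UNIV. Q a b t^2) / 2
    \<le> (\<Sum>a\<in>UNIV. \<Sum>b\<in>UNIV. Q a b t * R a b t)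
      - (\<Sum>a\<in>UNIV. \<Sum>b\<in>UNIV. Q a b t * (outflow a b t - inflow a b t))
      + real CARD('n)^2 * (Rmax^2 + 3/2 * d^2 * mumax^2)"
proof -
  have "(\<Sum>a\<in>UNIV. \<Sum>b\<in>UNIV. Q a b (Suc t)^2 / 2 - Q a b t^2 / 2)
      \<le> (\<Sum>a\<in>(UNIV::'n set). \<Sum>b\<in>(UNIV::'n set). Q a b t * R a b t - Q a b t * (outflow a b t - inflow a b t)
            + (Rmax^2 + 3/2 * d^2 * mumax^2))"
    by (intro sum_mono) (use queue_drift_le in \<open>simp add: algebra_simps\<close>)
  then show ?thesis
    by (simp add: sum_subtractf sum.distrib sum_divide_distrib power2_eq_square)
qed

lemma backpressure_sum_ge:
  "(\<Sum>l\<in>Lk. mu l (P l t) * W l t)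
    \<le> (\<Sum>a\<in>UNIV. \<Sum>b\<in>UNIV. Q a b t * (outflow a b t - inflow a b t))"
proof -
  have "(\<Sum>l\<in>Lk. mu l (P l t) * W l t)
      \<le> (\<Sum>l\<in>Lk. \<Sum>b\<in>UNIV. M b l t * (Q (fst l) b t - Q (snd l) b t))"
    by (intro sum_mono routing_attains_weight)
  also have "\<dots> = (\<Sum>a\<in>UNIV. \<Sum>b\<in>UNIV. Q a b t * (outflow a b t - inflow a b t))"
    unfolding outflow_def inflow_def by (rule sum_links_potential_difference)
  finally show ?thesis .
qed

definition lyapunov :: "nat \<Rightarrow> real" where
  "lyapunov t = (\<Sum>a\<in>UNIV. \<Sum>b\<in>UNIV. Q a b t^2) / 2 + (\<Sum>l\<in>Lk. (E l t - \<theta>)^2) / 2"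

lemma lyapunov_nonneg: "0 \<le> lyapunov t"
  unfolding lyapunov_def by (intro add_nonneg_nonneg divide_nonneg_pos sum_nonneg) auto

lemma lyapunov_init: "lyapunov 0 = real (card Lk) * \<theta>^2 / 2"
proof -
  have "(\<Sum>l\<in>Lk. (E l 0 - \<theta>)^2) = (\<Sum>l\<in>Lk. \<theta>^2)"
    by (rule sum.cong) (auto simp: key_init)
  then show ?thesis unfolding lyapunov_def by (simp add: queue_init)
qed

lemma Bconst_plus_routing_le_Btilde:
  "Bconst Lk Rmax mumax Pmax Kmax + \<gamma> * real (card Lk) * mumax \<le> Btilde Lk Rmax mumax Pmax Kmax"
proof -
  have "card Lk \<le> CARD('n) * dmax Lk" by (rule card_links_le)
  also have "\<dots> \<le> CARD('n)^2 * dmax Lk" by (simp add: power2_eq_square)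
  finally have "real (card Lk) \<le> real CARD('n)^2 * d" by (metis of_nat_le_iff of_nat_mult of_nat_power)
  then have "\<gamma> * mumax * real (card Lk) \<le> \<gamma> * mumax * (real CARD('n)^2 * d)"
    using gamma_nonneg params by (intro mult_left_mono) auto
  then show ?thesis by (simp add: Btilde_def \<gamma>_def algebra_simps)
qed

end

section \<open>Feasible policies\<close>

locale feasible_run =
  fixes Lk :: "('n::finite \<times> 'n) set"
    and K :: "'n \<times> 'n \<Rightarrow> real" and mu :: "'n \<times> 'n \<Rightarrow> real \<Rightarrow> real"
    and Rmax Pmax :: real
    and S :: "'n \<times> 'n \<Rightarrow> nat \<Rightarrow> bool" and E P :: "'n \<times> 'n \<Rightarrow> nat \<Rightarrow> real"
    and R :: "'n \<Rightarrow> 'n \<Rightarrow> nat \<Rightarrow> real" and M :: "'n \<Rightarrow> 'n \<times> 'n \<Rightarrow> nat \<Rightarrow> real"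
    and Q :: "'n \<Rightarrow> 'n \<Rightarrow> nat \<Rightarrow> real"
  assumes feasible: "feasible_policy Lk K mu Rmax Pmax S E P R M Q"
begin

lemma key_init: "l \<in> Lk \<Longrightarrow> E l 0 = 0"
  and key_step: "l \<in> Lk \<Longrightarrow> E l (Suc t) = E l t - P l t + (if S l t then K l else 0)"
  using feasible by (auto simp: feasible_policy_def key_dyn_def)

lemma consumed_nonneg: "l \<in> Lk \<Longrightarrow> 0 \<le> P l t"
  and consumed_le_Pmax: "l \<in> Lk \<Longrightarrow> P l t \<le> Pmax"
  and consumed_le_key: "l \<in> Lk \<Longrightarrow> P l t \<le> E l t"
  using feasible by (auto simp: feasible_policy_def)

lemma admitted_nonneg: "0 \<le> R a b t" and admitted_le: "R a b t \<le> Rmax"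
  using feasible by (auto simp: feasible_policy_def)

lemma flow_nonneg: "l \<in> Lk \<Longrightarrow> 0 \<le> M b l t"
  and flow_sum_le: "l \<in> Lk \<Longrightarrow> (\<Sum>b\<in>UNIV. M b l t) \<le> mu l (P l t)"
  using feasible by (auto simp: feasible_policy_def)

lemma queue_nonneg: "0 \<le> Q a b t" and stable: "stable Q"
  using feasible by (auto simp: feasible_policy_def)

lemma queue_eq_sum:
  "a \<noteq> b \<Longrightarrow> Q a b T = (\<Sum>s<T. R a b s + (\<Sum>c\<in>Nin Lk a. M b (c, a) s) - (\<Sum>c\<in>Nout Lk a. M b (a, c) s))"
  using feasible by (induction T) (auto simp: feasible_policy_def queue_dyn_def)

lemma key_eq_sum: "l \<in> Lk \<Longrightarrow> E l T = (\<Sum>s<T. (if S l s then K l else 0) - P l s)"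
  by (induction T) (auto simp: key_init key_step)

lemma avg_consumed_le_keyrate:
  assumes l: "l \<in> Lk" and K: "0 \<le> K l" and T: "T > 0"
  shows "avg T (P l) \<le> K l"
proof -
  have "avg T (P l) \<le> avg T (\<lambda>s. if S l s then K l else 0)"
    using key_eq_sum[OF l, of T] consumed_nonneg[OF l, of T] consumed_le_key[OF l, of T]
    by (simp add: avg_def sum_subtractf divide_right_mono)
  also have "\<dots> \<le> avg T (\<lambda>s. K l)" by (rule avg_mono) (use K in auto)
  finally show ?thesis using T by (simp add: avg_const)
qed

lemma avg_flow_balance:
  assumes "a \<noteq> b" and "T > 0"
  shows "(\<Sum>c\<in>Nout Lk a. avg T (M b (a, c))) - (\<Sum>c\<in>Nin Lk a. avg T (M b (c, a)))
       = ravg R a b T - Q a b T / real T"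
proof -
  have "Q a b T / real T = avg T (\<lambda>s. R a b s + (\<Sum>c\<in>Nin Lk a. M b (c, a) s) - (\<Sum>c\<in>Nout Lk a. M b (a, c) s))"
    using queue_eq_sum[OF assms(1)] by (simp add: avg_def)
  also have "\<dots> = ravg R a b T + (\<Sum>c\<in>Nin Lk a. avg T (M b (c, a))) - (\<Sum>c\<in>Nout Lk a. avg T (M b (a, c)))"
    by (simp only: avg_diff avg_add avg_sum ravg_eq_avg)
  finally show ?thesis by simp
qed

lemma limit_rate_bounds:
  assumes "(\<lambda>\<tau>. ravg R a b \<tau>) \<longlonglongrightarrow> r"
  shows "0 \<le> r \<and> r \<le> Rmax"
proof -
  have "Rmax \<ge> 0" using admitted_nonneg[of a b 0] admitted_le[of a b 0] by simp
  then have "0 \<le> ravg R a b \<tau> \<and> ravg R a b \<tau> \<le> Rmax" for \<tau>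
    using avg_nonneg[of \<tau> "R a b"] avg_mono[of \<tau> "R a b" "\<lambda>s. Rmax"]
      admitted_nonneg admitted_le avg_const[of \<tau> Rmax]
    by (cases "\<tau> = 0") (auto simp: ravg_eq_avg avg_def)
  then show ?thesis
    using tendsto_lowerbound[OF assms] tendsto_upperbound[OF assms] by auto
qed

end

lemma zero_rate_achievable:
  assumes "Rmax \<ge> 0" "Pmax \<ge> 0" "\<forall>l\<in>Lk. 0 \<le> mu l 0"
  shows "achievable Lk K mu Rmax Pmax (\<lambda>a b. 0)"
  unfolding achievable_def
proof (intro exI conjI)
  show "feasible_policy Lk K mu Rmax Pmax (\<lambda>l t. False) (\<lambda>l t. 0) (\<lambda>l t. 0) (\<lambda>a b t. 0) (\<lambda>b l t. 0) (\<lambda>a b t. 0)"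
    unfolding feasible_policy_def key_dyn_def queue_dyn_def stable_def
    using assms by (auto simp: Limsup_const)
qed (simp add: ravg_def[abs_def])

lemma Uopt_minus_le:
  assumes r0: "achievable Lk K mu Rmax Pmax r0"
    and bound: "\<And>r. achievable Lk K mu Rmax Pmax r
      \<Longrightarrow> ereal ((\<Sum>a\<in>UNIV. \<Sum>b\<in>UNIV. U a b (r a b)) - c) \<le> L"
  shows "ereal (Uopt Lk K mu Rmax Pmax U - c) \<le> L"
proof (cases L)
  case (real l)
  have "Uopt Lk K mu Rmax Pmax U \<le> l + c"
    unfolding Uopt_def
  proof (rule cSUP_least)
    show "{r. achievable Lk K mu Rmax Pmax r} \<noteq> {}" using r0 by blast
  next
    fix r assume "r \<in> {r. achievable Lk K mu Rmax Pmax r}"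
    then show "(\<Sum>a\<in>UNIV. \<Sum>b\<in>UNIV. U a b (r a b)) \<le> l + c" using bound[of r] real by simp
  qed
  then show ?thesis using real by simp
next
  case MInf
  then show ?thesis using bound[OF r0] by simp
qed simp

section \<open>Comparison of the algorithm with a feasible policy\<close>

locale algo_vs_policy =
  algo_trajectory Lk K mu U dU0 V \<delta> \<beta> Rmax Pmax Kmax mumax S E P R Q M +
  pol: feasible_run Lk K mu Rmax Pmax S' E' P' R' M' Q'
  for Lk :: "('n::finite \<times> 'n) set"
    and K :: "'n \<times> 'n \<Rightarrow> real" and mu :: "'n \<times> 'n \<Rightarrow> real \<Rightarrow> real"
    and U :: "'n \<Rightarrow> 'n \<Rightarrow> real \<Rightarrow> real" and dU0 :: "'n \<Rightarrow> 'n \<Rightarrow> real"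
    and V \<delta> \<beta> Rmax Pmax Kmax mumax :: real
    and S :: "'n \<times> 'n \<Rightarrow> nat \<Rightarrow> bool" and E P :: "'n \<times> 'n \<Rightarrow> nat \<Rightarrow> real"
    and R Q :: "'n \<Rightarrow> 'n \<Rightarrow> nat \<Rightarrow> real" and M :: "'n \<Rightarrow> 'n \<times> 'n \<Rightarrow> nat \<Rightarrow> real"
    and S' :: "'n \<times> 'n \<Rightarrow> nat \<Rightarrow> bool" and E' P' :: "'n \<times> 'n \<Rightarrow> nat \<Rightarrow> real"
    and R' Q' :: "'n \<Rightarrow> 'n \<Rightarrow> nat \<Rightarrow> real" and M' :: "'n \<Rightarrow> 'n \<times> 'n \<Rightarrow> nat \<Rightarrow> real"
begin

text \<open>The algorithm at slot \<open>t\<close> is compared with the averages over \<open>[0, T)\<close> of the primed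
  policy; \<open>deviation T r\<close> measures how far these averages are from the rates \<open>r\<close>.\<close>
definition "deviation T r a b = Q' a b T / real T + \<bar>r a b - ravg R' a b T\<bar>"

lemma key_comparison:
  assumes l: "l \<in> Lk" and T: "T > 0"
  shows "avg T (\<lambda>s. mu l (P' l s)) * W l t
      + ((E l (Suc t) - \<theta>)^2 / 2 - (E l t - \<theta>)^2 / 2) - (Pmax + Kmax)^2 / 2
    \<le> mu l (P l t) * W l t"
proof -
  have "avg T (\<lambda>s. W l t * mu l (P' l s) + (E l t - \<theta>) * P' l s)
      \<le> avg T (\<lambda>s. mu l (P l t) * W l t + (E l t - \<theta>) * P l t)"
    using consumption_link_ge[OF l] pol.consumed_nonneg[OF l] pol.consumed_le_Pmax[OF l]
    by (intro avg_mono) (simp add: mult.commute)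
  then have "W l t * avg T (\<lambda>s. mu l (P' l s)) + (E l t - \<theta>) * avg T (P' l)
      \<le> mu l (P l t) * W l t + (E l t - \<theta>) * P l t"
    using T by (simp only: avg_add avg_cmult avg_const)
  moreover have "(E l (Suc t) - \<theta>)^2 / 2 - (E l t - \<theta>)^2 / 2 - (Pmax + Kmax)^2 / 2
      \<le> (E l t - \<theta>) * (avg T (P' l) - P l t)"
    using keygen l pol.consumed_nonneg[OF l]
    by (intro key_drift_le[OF l] avg_nonneg pol.avg_consumed_le_keyrate[OF l _ T]) auto
  ultimately show ?thesis by (simp add: algebra_simps)
qed

lemma avg_flow_le_weight:
  assumes l: "l \<in> Lk" and T: "T > 0"
  shows "(\<Sum>b\<in>UNIV. avg T (M' b l) * (Q (fst l) b t - Q (snd l) b t)) - \<gamma> * mumax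
    \<le> avg T (\<lambda>s. mu l (P' l s)) * W l t"
proof -
  have total: "(\<Sum>b\<in>UNIV. avg T (M' b l)) \<le> avg T (\<lambda>s. mu l (P' l s))"
    unfolding avg_sum[symmetric] by (intro avg_mono pol.flow_sum_le[OF l])
  have "avg T (\<lambda>s. mu l (P' l s)) \<le> avg T (\<lambda>s. mumax)"
    using rate_bounds[OF l] pol.consumed_nonneg[OF l] pol.consumed_le_Pmax[OF l] by (intro avg_mono) auto
  then have rate: "(\<Sum>b\<in>UNIV. avg T (M' b l)) \<le> mumax"
    using total T by (simp add: avg_const)
  have "(\<Sum>b\<in>UNIV. avg T (M' b l) * (Q (fst l) b t - Q (snd l) b t - \<gamma>))
      \<le> (\<Sum>b\<in>UNIV. avg T (M' b l) * W l t)"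
    using W_ge_backlog_gap pol.flow_nonneg[OF l] by (intro sum_mono mult_left_mono avg_nonneg) auto
  also have "\<dots> \<le> avg T (\<lambda>s. mu l (P' l s)) * W l t"
    using total W_nonneg by (simp add: sum_distrib_right[symmetric] mult_right_mono)
  finally have "(\<Sum>b\<in>UNIV. avg T (M' b l) * (Q (fst l) b t - Q (snd l) b t))
      - \<gamma> * (\<Sum>b\<in>UNIV. avg T (M' b l)) \<le> avg T (\<lambda>s. mu l (P' l s)) * W l t"
    by (simp add: right_diff_distrib sum_subtractf sum_distrib_left mult.commute)
  moreover have "\<gamma> * (\<Sum>b\<in>UNIV. avg T (M' b l)) \<le> \<gamma> * mumax"
    using rate gamma_nonneg by (rule mult_left_mono)
  ultimately show ?thesis by linarith
qed

lemma avg_flow_potential_ge: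
  assumes T: "T > 0"
  shows "(\<Sum>a\<in>UNIV. \<Sum>b\<in>UNIV. Q a b t * r a b) - (\<Sum>a\<in>UNIV. \<Sum>b\<in>UNIV. Q a b t * deviation T r a b)
    \<le> (\<Sum>l\<in>Lk. \<Sum>b\<in>UNIV. avg T (M' b l) * (Q (fst l) b t - Q (snd l) b t))"
proof -
  have "Q a b t * r a b - Q a b t * deviation T r a b
      \<le> Q a b t * ((\<Sum>c\<in>Nout Lk a. avg T (M' b (a, c))) - (\<Sum>c\<in>Nin Lk a. avg T (M' b (c, a))))" for a b
  proof (cases "a = b")
    case False
    have "r a b - deviation T r a b \<le> ravg R' a b T - Q' a b T / real T"
      unfolding deviation_def by linarith
    then show ?thesis
      using pol.avg_flow_balance[OF False T] queue_nonneg[of a b t]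
      by (simp add: right_diff_distrib[symmetric] mult_left_mono)
  qed (simp add: queue_at_destination)
  then have "(\<Sum>a\<in>UNIV. \<Sum>b\<in>UNIV. Q a b t * r a b - Q a b t * deviation T r a b)
      \<le> (\<Sum>a\<in>UNIV. \<Sum>b\<in>UNIV. Q a b t * ((\<Sum>c\<in>Nout Lk a. avg T (M' b (a, c))) - (\<Sum>c\<in>Nin Lk a. avg T (M' b (c, a)))))"
    by (intro sum_mono)
  then show ?thesis
    unfolding sum_links_potential_difference[where F = "\<lambda>b l. avg T (M' b l)" and Q = "\<lambda>a b. Q a b t"]
    by (simp only: sum_subtractf)
qed

lemma deviation_nonneg: "0 \<le> deviation T r a b"
  unfolding deviation_def using pol.queue_nonneg by simp

lemma drift_plus_penalty_slot:
  assumes T: "T > 0" and r: "\<And>a b. 0 \<le> r a b \<and> r a b \<le> Rmax"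
  shows "V * (\<Sum>a\<in>UNIV. \<Sum>b\<in>UNIV. U a b (r a b)) + (lyapunov (Suc t) - lyapunov t)
    \<le> V * (\<Sum>a\<in>UNIV. \<Sum>b\<in>UNIV. U a b (R a b t))
      + (Bconst Lk Rmax mumax Pmax Kmax + \<gamma> * real (card Lk) * mumax)
      + (\<Sum>a\<in>UNIV. \<Sum>b\<in>UNIV. Q a b t * deviation T r a b)"
proof -
  have keys: "(\<Sum>l\<in>Lk. avg T (\<lambda>s. mu l (P' l s)) * W l t)
      + ((\<Sum>l\<in>Lk. (E l (Suc t) - \<theta>)^2) / 2 - (\<Sum>l\<in>Lk. (E l t - \<theta>)^2) / 2)
      - real (card Lk) * (Pmax + Kmax)^2 / 2
    \<le> (\<Sum>l\<in>Lk. mu l (P l t) * W l t)"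
  proof -
    have "(\<Sum>l\<in>Lk. avg T (\<lambda>s. mu l (P' l s)) * W l t
        + ((E l (Suc t) - \<theta>)^2 / 2 - (E l t - \<theta>)^2 / 2) - (Pmax + Kmax)^2 / 2)
      \<le> (\<Sum>l\<in>Lk. mu l (P l t) * W l t)"
      by (intro sum_mono key_comparison T)
    then show ?thesis by (simp add: sum.distrib sum_subtractf sum_divide_distrib)
  qed
  have flows: "(\<Sum>l\<in>Lk. \<Sum>b\<in>UNIV. avg T (M' b l) * (Q (fst l) b t - Q (snd l) b t))
      - \<gamma> * real (card Lk) * mumax
    \<le> (\<Sum>l\<in>Lk. avg T (\<lambda>s. mu l (P' l s)) * W l t)"
  proof -
    have "(\<Sum>l\<in>Lk. (\<Sum>b\<in>UNIV. avg T (M' b l) * (Q (fst l) b t - Q (snd l) b t)) - \<gamma> * mumax)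
      \<le> (\<Sum>l\<in>Lk. avg T (\<lambda>s. mu l (P' l s)) * W l t)"
      by (intro sum_mono avg_flow_le_weight T)
    then show ?thesis by (simp add: sum_subtractf mult_ac)
  qed
  have B: "Bconst Lk Rmax mumax Pmax Kmax
      = real CARD('n)^2 * (Rmax^2 + 3/2 * d^2 * mumax^2) + real (card Lk) * (Pmax + Kmax)^2 / 2"
    by (simp add: Bconst_def algebra_simps)
  have "lyapunov (Suc t) - lyapunov t
      = (\<Sum>a\<in>UNIV. \<Sum>b\<in>UNIV. Q a b (Suc t)^2) / 2 - (\<Sum>a\<in>UNIV. \<Sum>b\<in>UNIV. Q a b t^2) / 2
        + ((\<Sum>l\<in>Lk. (E l (Suc t) - \<theta>)^2) / 2 - (\<Sum>l\<in>Lk. (E l t - \<theta>)^2) / 2)"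
    by (simp add: lyapunov_def)
  then show ?thesis
    using admission_sum_ge[where r = r and t = t, OF r] queue_drift_sum_le[where t = t] backpressure_sum_ge[where t = t]
      keys flows avg_flow_potential_ge[OF T, where t = t and r = r] B
    by linarith
qed

lemma utility_avg_ge:
  assumes T: "T > 0" and \<tau>: "\<tau> > 0" and r: "\<And>a b. 0 \<le> r a b \<and> r a b \<le> Rmax"
  shows "(\<Sum>a\<in>UNIV. \<Sum>b\<in>UNIV. U a b (r a b))
      - (Bconst Lk Rmax mumax Pmax Kmax + \<gamma> * real (card Lk) * mumax) / V
      - (V * \<beta> + \<gamma>) * (\<Sum>a\<in>UNIV. \<Sum>b\<in>UNIV. deviation T r a b) / V
      - real (card Lk) * \<theta>^2 / (2 * V) / real \<tau>
    \<le> (\<Sum>a\<in>UNIV. \<Sum>b\<in>UNIV. U a b (ravg R a b \<tau>))"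
proof -
  define u where "u = (\<Sum>a\<in>UNIV. \<Sum>b\<in>UNIV. U a b (r a b))"
  define utility where "utility s = (\<Sum>a\<in>UNIV. \<Sum>b\<in>UNIV. U a b (R a b s))" for s
  define B where "B = Bconst Lk Rmax mumax Pmax Kmax + \<gamma> * real (card Lk) * mumax"
  define D where "D = (V * \<beta> + \<gamma>) * (\<Sum>a\<in>UNIV. \<Sum>b\<in>UNIV. deviation T r a b)"
  have "(\<Sum>a\<in>UNIV. \<Sum>b\<in>UNIV. Q a b s * deviation T r a b) \<le> D" for s
    unfolding D_def sum_distrib_left
    by (intro sum_mono mult_right_mono queue_le deviation_nonneg)
  then have "avg \<tau> (\<lambda>s. V * u + (lyapunov (Suc s) - lyapunov s)) \<le> avg \<tau> (\<lambda>s. V * utility s + B + D)"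
    using drift_plus_penalty_slot[where r = r, OF T r] unfolding u_def utility_def B_def
    by (intro avg_mono) (smt (verit))
  then have drift: "V * u + (lyapunov \<tau> - lyapunov 0) / real \<tau> \<le> V * avg \<tau> utility + B + D"
    using \<tau> by (simp only: avg_add avg_cmult avg_const avg_increments)
  have "avg \<tau> utility \<le> (\<Sum>a\<in>UNIV. \<Sum>b\<in>UNIV. U a b (ravg R a b \<tau>))"
    unfolding utility_def avg_sum ravg_eq_avg
    by (intro sum_mono concave_on_avg_le) (use concave \<tau> admitted_nonneg in auto)
  then have jensen: "V * avg \<tau> utility \<le> V * (\<Sum>a\<in>UNIV. \<Sum>b\<in>UNIV. U a b (ravg R a b \<tau>))"
    using params by simp
  have "- lyapunov 0 / real \<tau> \<le> (lyapunov \<tau> - lyapunov 0) / real \<tau>"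
    using lyapunov_nonneg[of \<tau>] divide_right_mono[of "- lyapunov 0" "lyapunov \<tau> - lyapunov 0" "real \<tau>"]
    by simp
  moreover have "lyapunov 0 / real \<tau> = V * (real (card Lk) * \<theta>^2 / (2 * V) / real \<tau>)"
    using params by (simp add: lyapunov_init)
  moreover have "V * (u - B / V - D / V - real (card Lk) * \<theta>^2 / (2 * V) / real \<tau>)
      = V * u - B - D - V * (real (card Lk) * \<theta>^2 / (2 * V) / real \<tau>)"
    using params by (simp add: field_simps)
  ultimately have "V * (u - B / V - D / V - real (card Lk) * \<theta>^2 / (2 * V) / real \<tau>)
      \<le> V * (\<Sum>a\<in>UNIV. \<Sum>b\<in>UNIV. U a b (ravg R a b \<tau>))"
    using drift jensen by linarith
  then show ?thesis
    using params by (simp add: u_def B_def D_def)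
qed

lemma deviation_frequently_small:
  assumes lim: "\<And>a b. (\<lambda>\<tau>. ravg R' a b \<tau>) \<longlonglongrightarrow> r a b" and \<eta>: "\<eta> > 0"
  shows "\<exists>T>0. (\<Sum>a\<in>UNIV. \<Sum>b\<in>UNIV. deviation T r a b) < \<eta>"
proof -
  have "(\<lambda>T. \<Sum>a\<in>UNIV. \<Sum>b\<in>UNIV. \<bar>r a b - ravg R' a b T\<bar>)
      \<longlonglongrightarrow> (\<Sum>a\<in>(UNIV::'n set). \<Sum>b\<in>(UNIV::'n set). \<bar>r a b - r a b\<bar>)"
    by (intro tendsto_intros lim)
  then have "\<forall>\<^sub>F T in sequentially. (\<Sum>a\<in>UNIV. \<Sum>b\<in>UNIV. \<bar>r a b - ravg R' a b T\<bar>) < \<eta> / 2"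
    using \<eta> by (intro order_tendstoD(2)) auto
  then obtain T1 where T1: "\<And>T. T \<ge> T1 \<Longrightarrow> (\<Sum>a\<in>UNIV. \<Sum>b\<in>UNIV. \<bar>r a b - ravg R' a b T\<bar>) < \<eta> / 2"
    unfolding eventually_sequentially by blast
  have "limsup (\<lambda>t. ereal (avg t (\<lambda>s. \<Sum>a\<in>UNIV. \<Sum>b\<in>UNIV. Q' a b s))) < \<infinity>"
    using pol.stable by (simp add: stable_def avg_def)
  then have "\<exists>T\<ge>max T1 1. (\<Sum>a\<in>UNIV. \<Sum>b\<in>UNIV. Q' a b T) < \<eta> / 2 * real T"
    by (rule avg_frequently_small) (use pol.queue_nonneg \<eta> in \<open>auto intro!: sum_nonneg\<close>)
  then obtain T where T: "T \<ge> max T1 1" "(\<Sum>a\<in>UNIV. \<Sum>b\<in>UNIV. Q' a b T) < \<eta> / 2 * real T"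
    by blast
  have "(\<Sum>a\<in>UNIV. \<Sum>b\<in>UNIV. deviation T r a b)
      = (\<Sum>a\<in>UNIV. \<Sum>b\<in>UNIV. Q' a b T) / real T + (\<Sum>a\<in>UNIV. \<Sum>b\<in>UNIV. \<bar>r a b - ravg R' a b T\<bar>)"
    by (simp add: deviation_def sum.distrib sum_divide_distrib)
  also have "\<dots> < \<eta> / 2 + \<eta> / 2"
    using T T1[of T] by (intro add_strict_mono) (auto simp: divide_less_eq)
  finally show ?thesis using T by (intro exI[of _ T]) auto
qed

lemma liminf_utility_ge_deviation:
  assumes T: "T > 0" and r: "\<And>a b. 0 \<le> r a b \<and> r a b \<le> Rmax"
  shows "ereal ((\<Sum>a\<in>UNIV. \<Sum>b\<in>UNIV. U a b (r a b)) - Btilde Lk Rmax mumax Pmax Kmax / V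
      - (V * \<beta> + \<gamma>) * (\<Sum>a\<in>UNIV. \<Sum>b\<in>UNIV. deviation T r a b) / V)
    \<le> liminf (\<lambda>\<tau>. ereal (\<Sum>a\<in>UNIV. \<Sum>b\<in>UNIV. U a b (ravg R a b \<tau>)))"
proof (rule liminf_ge_if_ge_minus_reciprocal)
  fix \<tau> :: nat assume \<tau>: "\<tau> > 0"
  show "(\<Sum>a\<in>UNIV. \<Sum>b\<in>UNIV. U a b (r a b)) - Btilde Lk Rmax mumax Pmax Kmax / V
      - (V * \<beta> + \<gamma>) * (\<Sum>a\<in>UNIV. \<Sum>b\<in>UNIV. deviation T r a b) / V
      - real (card Lk) * \<theta>^2 / (2 * V) / real \<tau>
    \<le> (\<Sum>a\<in>UNIV. \<Sum>b\<in>UNIV. U a b (ravg R a b \<tau>))"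
    using utility_avg_ge[where r = r, OF T \<tau> r] divide_right_mono[OF Bconst_plus_routing_le_Btilde, of V]
      params by linarith
qed

lemma liminf_utility_ge:
  assumes lim: "\<And>a b. (\<lambda>\<tau>. ravg R' a b \<tau>) \<longlonglongrightarrow> r a b"
  shows "ereal ((\<Sum>a\<in>UNIV. \<Sum>b\<in>UNIV. U a b (r a b)) - Btilde Lk Rmax mumax Pmax Kmax / V)
    \<le> liminf (\<lambda>\<tau>. ereal (\<Sum>a\<in>UNIV. \<Sum>b\<in>UNIV. U a b (ravg R a b \<tau>)))"
proof (rule ereal_le_epsilon2)
  fix \<epsilon> :: real assume \<epsilon>: "\<epsilon> > 0"
  define c where "c = V * \<beta> + \<gamma>"
  have c: "c \<ge> 0" using params beta_nonneg gamma_nonneg by (simp add: c_def)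
  have r: "0 \<le> r a b \<and> r a b \<le> Rmax" for a b by (rule pol.limit_rate_bounds[OF lim])
  have "\<epsilon> * V / (c + 1) > 0"
    using \<epsilon> params c by (intro divide_pos_pos mult_pos_pos) auto
  then obtain T where T: "T > 0"
    and dev: "(\<Sum>a\<in>UNIV. \<Sum>b\<in>UNIV. deviation T r a b) < \<epsilon> * V / (c + 1)"
    using deviation_frequently_small[OF lim] by blast
  have "c * (\<Sum>a\<in>UNIV. \<Sum>b\<in>UNIV. deviation T r a b)
      \<le> (c + 1) * (\<Sum>a\<in>UNIV. \<Sum>b\<in>UNIV. deviation T r a b)"
    by (intro mult_right_mono sum_nonneg deviation_nonneg) auto
  also have "\<dots> \<le> \<epsilon> * V"
    using dev c by (simp add: less_divide_eq mult.commute)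
  finally have "c * (\<Sum>a\<in>UNIV. \<Sum>b\<in>UNIV. deviation T r a b) / V \<le> \<epsilon>"
    using params by (simp add: divide_le_eq)
  then have "ereal ((\<Sum>a\<in>UNIV. \<Sum>b\<in>UNIV. U a b (r a b)) - Btilde Lk Rmax mumax Pmax Kmax / V - \<epsilon>)
    \<le> ereal ((\<Sum>a\<in>UNIV. \<Sum>b\<in>UNIV. U a b (r a b)) - Btilde Lk Rmax mumax Pmax Kmax / V
      - c * (\<Sum>a\<in>UNIV. \<Sum>b\<in>UNIV. deviation T r a b) / V)"
    by simp
  also have "ereal ((\<Sum>a\<in>UNIV. \<Sum>b\<in>UNIV. U a b (r a b)) - Btilde Lk Rmax mumax Pmax Kmax / V
      - c * (\<Sum>a\<in>UNIV. \<Sum>b\<in>UNIV. deviation T r a b) / V)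
    \<le> liminf (\<lambda>\<tau>. ereal (\<Sum>a\<in>UNIV. \<Sum>b\<in>UNIV. U a b (ravg R a b \<tau>)))"
    unfolding c_def using T r by (rule liminf_utility_ge_deviation)
  finally show "ereal ((\<Sum>a\<in>UNIV. \<Sum>b\<in>UNIV. U a b (r a b)) - Btilde Lk Rmax mumax Pmax Kmax / V)
    \<le> liminf (\<lambda>\<tau>. ereal (\<Sum>a\<in>UNIV. \<Sum>b\<in>UNIV. U a b (ravg R a b \<tau>))) + ereal \<epsilon>"
    by (cases "liminf (\<lambda>\<tau>. ereal (\<Sum>a\<in>UNIV. \<Sum>b\<in>UNIV. U a b (ravg R a b \<tau>)))") auto
qed

end

theorem theorem3:
  fixes Lk :: "('n::finite \<times> 'n) set"
    and K :: "'n \<times> 'n \<Rightarrow> real" and mu :: "'n \<times> 'n \<Rightarrow> real \<Rightarrow> real"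
    and U :: "'n \<Rightarrow> 'n \<Rightarrow> real \<Rightarrow> real" and dU0 :: "'n \<Rightarrow> 'n \<Rightarrow> real"
    and V \<delta> \<beta> Rmax Pmax Kmax mumax :: real
    and S :: "'n \<times> 'n \<Rightarrow> nat \<Rightarrow> bool" and E P :: "'n \<times> 'n \<Rightarrow> nat \<Rightarrow> real"
    and R Q :: "'n \<Rightarrow> 'n \<Rightarrow> nat \<Rightarrow> real" and M :: "'n \<Rightarrow> 'n \<times> 'n \<Rightarrow> nat \<Rightarrow> real"
  assumes links: "\<forall>(a, c)\<in>Lk. a \<noteq> c"
    and params: "V > 0" "\<delta> > 0" "Rmax \<ge> 0" "Pmax \<ge> 0" "Kmax \<ge> 0" "mumax \<ge> 0"
    and keygen: "\<forall>l\<in>Lk. 0 \<le> K l \<and> K l \<le> Kmax"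
    and rate: "\<forall>l\<in>Lk. \<forall>p\<in>{0..Pmax}. 0 \<le> mu l p \<and> mu l p \<le> mumax \<and> mu l p \<le> \<delta> * p"
    and concave: "\<forall>a b. concave_on {0..} (U a b)"
    and nondecr: "\<forall>a b. mono_on {0..} (U a b)"
    and deriv0: "\<forall>a b. (U a b has_real_derivative dU0 a b) (at 0 within {0..})"
    and beta: "\<beta> = Max (range (\<lambda>(a, b). dU0 a b))"
    and run: "algo_run Lk K mu U V \<delta> \<beta> Rmax Pmax mumax S E P R M Q"
  shows "ereal (Uopt Lk K mu Rmax Pmax U - Btilde Lk Rmax mumax Pmax Kmax / V)
           \<le> liminf (\<lambda>\<tau>. ereal (\<Sum>a\<in>UNIV. \<Sum>b\<in>UNIV. U a b (ravg R a b \<tau>)))"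
proof -
  interpret algo_trajectory Lk K mu U dU0 V \<delta> \<beta> Rmax Pmax Kmax mumax S E P R Q M
    by unfold_locales (fact params keygen rate concave nondecr deriv0 beta run)+
  show ?thesis
  proof (rule Uopt_minus_le)
    show "achievable Lk K mu Rmax Pmax (\<lambda>a b. 0)"
      using params rate_bounds by (intro zero_rate_achievable) auto
  next
    fix r assume "achievable Lk K mu Rmax Pmax r"
    then obtain S' E' P' R' M' Q' where policy: "feasible_policy Lk K mu Rmax Pmax S' E' P' R' M' Q'"
      and lim: "\<forall>a b. (\<lambda>\<tau>. ravg R' a b \<tau>) \<longlonglongrightarrow> r a b"
      unfolding achievable_def by blast
    interpret algo_vs_policy Lk K mu U dU0 V \<delta> \<beta> Rmax Pmax Kmax mumax S E P R Q M S' E' P' R' Q' M'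
      by (intro algo_vs_policy.intro algo_trajectory_axioms feasible_run.intro policy)
    show "ereal ((\<Sum>a\<in>UNIV. \<Sum>b\<in>UNIV. U a b (r a b)) - Btilde Lk Rmax mumax Pmax Kmax / V)
      \<le> liminf (\<lambda>\<tau>. ereal (\<Sum>a\<in>UNIV. \<Sum>b\<in>UNIV. U a b (ravg R a b \<tau>)))"
      using lim by (intro liminf_utility_ge) auto
  qed
qed

end
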